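(* Let $x,z\in X^c$. Then $(F_x,\phi_x)\cong(F_z,\phi_z)$ as extended representation graphs if and only if $x\sim_c z$.
   Context: $E=(E^0,E^1,s,r)$ is a row-finite directed graph; for each vertex $v$ emitting an edge a fixed edge $e^v\in s^{-1}(v)$ is called special, others nonspecial. The double graph $E_d$ has vertices $E^0$ and edges $e$ (real) and $e^*$ (ghost) for $e\in E^1$, with $s_d(e)=s(e),r_d(e)=r(e),s_d(e^* )=r(e),r_d(e^* )=s(e)$. For a path $p=e_1\dots e_n$ set $p^*=e_n^*\dots e_1^*$. The set $X$ of basis paths consists of the paths in $E_d$: vertices; $p,p^*$ for paths $p$ of length $\ge1$ in $E$; $pq^*$ with $p=e_1\dots e_k,q=f_1\dots f_n$ of length $\ge1$ in $E$, $r(p)=r(q)$, and $e_k\ne f_n$ or $e_k=f_n$ nonspecial. $X^c$ is the set of closed paths of length $\ge1$ in $E_d$ consisting only of real edges or only of ghost edges (equivalently, finite basis paths $x$ with $x^2$ a basis path). $x_1\dots x_m\sim_c y_1\dots y_n$ iff $x_1\dots x_m=y_{k+1}\dots y_ny_1\dots y_k$ for some $1\le k\le n$. An extended representation graph for $E$ is a pair $(F,\phi)$, $F$ a directed graph, $\phi:F\to E_d$ a graph homomorphism, such that for every $w\in F^0$: (i) $w$ is a source or receives exactly one edge $f_w$; (ii) if $w$ is a source or $\phi(f_w)$ is a nonspecial real edge, $\phi$ maps $s^{-1}(w)$ bijectively onto $s_d^{-1}(\phi(w))$; (iii) if $\phi(f_w)$ is a special real edge, onto $s_d^{-1}(\phi(w))\setminus\{\phi(f_w)^*\}$;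 (iv) if $\phi(f_w)$ is a ghost edge, onto the ghost edges in $s_d^{-1}(\phi(w))$. An isomorphism $(F,\phi)\to(G,\psi)$ is a graph isomorphism $\alpha$ with $\psi\circ\alpha=\phi$. $(F_x,\phi_x)$ for $x=x_1\dots x_m\in X^c$: for $1\le i\le m$, $X_i$ = basis paths $y=y_1\dots y_n$, $n\ge1$, with $x_iy_1$ a basis path and $y_1\ne x_{i+1}$ ($x_{m+1}=x_1$). Vertices $w_i$ ($1\le i\le m$), $w_{i,y}$ ($y\in X_i$), all distinct; edges $f_i$ from $w_{i-1}$ to $w_i$ ($w_0=w_m$), and $f_{i,y}$ to $w_{i,y}$ from $w_i$ if $|y|=1$, from $w_{i,y_1\dots y_{n-1}}$ if $n\ge2$; $\phi_x(w_i)=r_d(x_i)$, $\phi_x(w_{i,y})=r_d(y)$, $\phi_x(f_i)=x_i$, $\phi_x(f_{i,y})=$ last edge of $y$. *)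

theory Defs
  imports Main
begin

text \<open>A directed graph E is given by its vertex type 'v, edge type 'e and the
  source/range maps s, r.  The choice of special edges is a map sp :: 'v => 'e.\<close>

definition row_finite :: "('e \<Rightarrow> 'v) \<Rightarrow> bool" where
  "row_finite s \<longleftrightarrow> (\<forall>v. finite {e. s e = v})"

definition special_choice :: "('e \<Rightarrow> 'v) \<Rightarrow> ('v \<Rightarrow> 'e) \<Rightarrow> bool" where
  "special_choice s sp \<longleftrightarrow> (\<forall>v. (\<exists>e. s e = v) \<longrightarrow> s (sp v) = v)"

definition special :: "('e \<Rightarrow> 'v) \<Rightarrow> ('v \<Rightarrow> 'e) \<Rightarrow> 'e \<Rightarrow> bool" where
  "special s sp e \<longleftrightarrow> e = sp (s e)"

datatype 'e dedge = Real 'e | Ghost 'e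

fun sd :: "('e \<Rightarrow> 'v) \<Rightarrow> ('e \<Rightarrow> 'v) \<Rightarrow> 'e dedge \<Rightarrow> 'v" where
  "sd s r (Real e) = s e"
| "sd s r (Ghost e) = r e"

fun rd :: "('e \<Rightarrow> 'v) \<Rightarrow> ('e \<Rightarrow> 'v) \<Rightarrow> 'e dedge \<Rightarrow> 'v" where
  "rd s r (Real e) = r e"
| "rd s r (Ghost e) = s e"

fun is_real :: "'e dedge \<Rightarrow> bool" where
  "is_real (Real e) = True"
| "is_real (Ghost e) = False"

definition dpath :: "('e \<Rightarrow> 'v) \<Rightarrow> ('e \<Rightarrow> 'v) \<Rightarrow> 'e dedge list \<Rightarrow> bool" where
  "dpath s r xs \<longleftrightarrow> xs \<noteq> [] \<and>
     (\<forall>i. Suc i < length xs \<longrightarrow> rd s r (xs ! i) = sd s r (xs ! Suc i))"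

text \<open>Basis paths of length >= 1: p, p^*, or p q^* (p = e_1..e_k, q = f_1..f_n,
  p q^* = e_1..e_k f_n^*..f_1^*) with e_k \<noteq> f_n or e_k = f_n nonspecial.
  (Vertices, the length-0 basis paths, never occur below.)\<close>
definition basis_path :: "('e \<Rightarrow> 'v) \<Rightarrow> ('e \<Rightarrow> 'v) \<Rightarrow> ('v \<Rightarrow> 'e) \<Rightarrow> 'e dedge list \<Rightarrow> bool" where
  "basis_path s r sp xs \<longleftrightarrow> dpath s r xs \<and>
     (\<exists>p q. xs = map Real p @ map Ghost (rev q) \<and>
        (p \<noteq> [] \<and> q \<noteq> [] \<longrightarrow> last p \<noteq> last q \<or> \<not> special s sp (last p)))"

definition Xc :: "('e \<Rightarrow> 'v) \<Rightarrow> ('e \<Rightarrow> 'v) \<Rightarrow> 'e dedge list set" where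
  "Xc s r = {xs. dpath s r xs \<and> sd s r (hd xs) = rd s r (last xs) \<and>
                 ((\<forall>e\<in>set xs. is_real e) \<or> (\<forall>e\<in>set xs. \<not> is_real e))}"

definition cyc_equiv :: "'a list \<Rightarrow> 'a list \<Rightarrow> bool" where
  "cyc_equiv xs ys \<longleftrightarrow> (\<exists>k. 1 \<le> k \<and> k \<le> length ys \<and> xs = drop k ys @ take k ys)"

record ('a, 'b, 'v, 'e) rgraph =
  gV :: "'a set"
  gE :: "'b set"
  gsrc :: "'b \<Rightarrow> 'a"
  gtgt :: "'b \<Rightarrow> 'a"
  phiV :: "'a \<Rightarrow> 'v"
  phiE :: "'b \<Rightarrow> 'e dedge"

definition ext_rep_graph :: "('e \<Rightarrow> 'v) \<Rightarrow> ('e \<Rightarrow> 'v) \<Rightarrow> ('v \<Rightarrow> 'e)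
    \<Rightarrow> ('a, 'b, 'v, 'e) rgraph \<Rightarrow> bool" where
  "ext_rep_graph s r sp F \<longleftrightarrow>
     (\<forall>f\<in>gE F. gsrc F f \<in> gV F \<and> gtgt F f \<in> gV F
        \<and> sd s r (phiE F f) = phiV F (gsrc F f) \<and> rd s r (phiE F f) = phiV F (gtgt F f)) \<and>
     (\<forall>w\<in>gV F.
        let In = {f\<in>gE F. gtgt F f = w}; Out = {f\<in>gE F. gsrc F f = w};
            T = {d. sd s r d = phiV F w} in
        (In = {} \<and> bij_betw (phiE F) Out T) \<or>
        (\<exists>fw. In = {fw} \<and>
           (case phiE F fw of
              Real e \<Rightarrow> (if special s sp e then bij_betw (phiE F) Out (T - {Ghost e})
                         else bij_betw (phiE F) Out T)
            | Ghost e \<Rightarrow> bij_betw (phiE F) Out {d\<in>T. \<not> is_real d})))"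

definition erg_iso :: "('a, 'b, 'v, 'e) rgraph \<Rightarrow> ('c, 'd, 'v, 'e) rgraph \<Rightarrow> bool" where
  "erg_iso F G \<longleftrightarrow> (\<exists>aV aE. bij_betw aV (gV F) (gV G) \<and> bij_betw aE (gE F) (gE G) \<and>
     (\<forall>f\<in>gE F. gsrc G (aE f) = aV (gsrc F f) \<and> gtgt G (aE f) = aV (gtgt F f)) \<and>
     (\<forall>w\<in>gV F. phiV G (aV w) = phiV F w) \<and>
     (\<forall>f\<in>gE F. phiE G (aE f) = phiE F f))"

text \<open>Construction of (F_x, phi_x), with 0-based indices:
  W i stands for w_{i+1}, WY i y for w_{i+1,y}, Fi i for f_{i+1}, FY i y for f_{i+1,y}.\<close>
datatype 'e fvert = W nat | WY nat "'e dedge list"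
datatype 'e fedge = Fi nat | FY nat "'e dedge list"

definition Xi :: "('e \<Rightarrow> 'v) \<Rightarrow> ('e \<Rightarrow> 'v) \<Rightarrow> ('v \<Rightarrow> 'e) \<Rightarrow> 'e dedge list \<Rightarrow> nat
    \<Rightarrow> 'e dedge list set" where
  "Xi s r sp x i = {y. basis_path s r sp y \<and> basis_path s r sp [x ! i, hd y]
                      \<and> hd y \<noteq> x ! (Suc i mod length x)}"

definition Fx :: "('e \<Rightarrow> 'v) \<Rightarrow> ('e \<Rightarrow> 'v) \<Rightarrow> ('v \<Rightarrow> 'e) \<Rightarrow> 'e dedge list
    \<Rightarrow> ('e fvert, 'e fedge, 'v, 'e) rgraph" where
  "Fx s r sp x = (let m = length x in
     \<lparr> gV = {W i | i. i < m} \<union> {WY i y | i y. i < m \<and> y \<in> Xi s r sp x i},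
       gE = {Fi i | i. i < m} \<union> {FY i y | i y. i < m \<and> y \<in> Xi s r sp x i},
       gsrc = (\<lambda>f. case f of Fi i \<Rightarrow> W ((i + m - 1) mod m)
                   | FY i y \<Rightarrow> (if length y = 1 then W i else WY i (butlast y))),
       gtgt = (\<lambda>f. case f of Fi i \<Rightarrow> W i | FY i y \<Rightarrow> WY i y),
       phiV = (\<lambda>w. case w of W i \<Rightarrow> rd s r (x ! i) | WY i y \<Rightarrow> rd s r (last y)),
       phiE = (\<lambda>f. case f of Fi i \<Rightarrow> x ! i | FY i y \<Rightarrow> last y) \<rparr>)"

end

theory Submission
  imports Defs
begin

text \<open>The vertices W i of F_x form the unique directed cycle of F_x, of length |x|, and
  all other vertices hang off it in trees.  An isomorphism must therefore map this cycle onto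
  the cycle of F_z preserving the edge labels x_i, which forces z to be a rotation of x.
  Conversely, rotating x by one step just relabels the index i of F_x to i + 1 mod |x|.\<close>

lemma Fx_simps:
  "gV (Fx s r sp x) = {W i | i. i < length x} \<union> {WY i y | i y. i < length x \<and> y \<in> Xi s r sp x i}"
  "gE (Fx s r sp x) = {Fi i | i. i < length x} \<union> {FY i y | i y. i < length x \<and> y \<in> Xi s r sp x i}"
  "gsrc (Fx s r sp x) (Fi i) = W ((i + length x - 1) mod length x)"
  "gsrc (Fx s r sp x) (FY i y) = (if length y = 1 then W i else WY i (butlast y))"
  "gtgt (Fx s r sp x) (Fi i) = W i"
  "gtgt (Fx s r sp x) (FY i y) = WY i y"
  "phiV (Fx s r sp x) (W i) = rd s r (x ! i)"
  "phiV (Fx s r sp x) (WY i y) = rd s r (last y)"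
  "phiE (Fx s r sp x) (Fi i) = x ! i"
  "phiE (Fx s r sp x) (FY i y) = last y"
  by (simp_all add: Fx_def Let_def)

lemma Suc_mod_pred_mod:
  fixes i n :: nat
  assumes "i < n"
  shows "Suc ((i + n - 1) mod n) mod n = i"
  using assms by (cases i) (auto simp: mod_Suc_eq)

lemma pred_mod_Suc_mod:
  fixes i n :: nat
  assumes "i < n"
  shows "(Suc i mod n + n - 1) mod n = i"
  using assms by (cases "Suc i = n") auto

lemma cyc_equiv_iff_rotate:
  assumes "ys \<noteq> []"
  shows "cyc_equiv xs ys \<longleftrightarrow> (\<exists>k. xs = rotate k ys)"
proof
  assume "cyc_equiv xs ys"
  then obtain k where "k \<le> length ys" "xs = drop k ys @ take k ys"
    unfolding cyc_equiv_def by blast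
  then have "xs = rotate k ys"
    by (cases "k = length ys") (simp_all add: rotate_drop_take)
  then show "\<exists>k. xs = rotate k ys" ..
next
  assume "\<exists>k. xs = rotate k ys"
  then obtain k where "xs = rotate k ys" ..
  then have xs: "xs = rotate (k mod length ys) ys"
    using rotate_conv_mod[of k ys] by (rule trans)
  show "cyc_equiv xs ys"
  proof (cases "k mod length ys = 0")
    case True
    then show ?thesis
      using assms xs unfolding cyc_equiv_def by (intro exI[of _ "length ys"]) (simp add: Suc_le_eq)
  next
    case False
    then show ?thesis
      using assms xs unfolding cyc_equiv_def
      by (intro exI[of _ "k mod length ys"]) (simp add: rotate_drop_take)
  qed
qed

lemma erg_iso_refl: "erg_iso F F"
  unfolding erg_iso_def by (intro exI[of _ id]) simp

lemma erg_iso_trans: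
  assumes "erg_iso F G" and "erg_iso G H"
  shows "erg_iso F H"
proof -
  obtain aV aE where aV: "bij_betw aV (gV F) (gV G)" and aE: "bij_betw aE (gE F) (gE G)"
    and a_hom: "\<forall>f\<in>gE F. gsrc G (aE f) = aV (gsrc F f) \<and> gtgt G (aE f) = aV (gtgt F f)"
    and a_phiV: "\<forall>w\<in>gV F. phiV G (aV w) = phiV F w"
    and a_phiE: "\<forall>f\<in>gE F. phiE G (aE f) = phiE F f"
    using assms(1) unfolding erg_iso_def by blast
  obtain bV bE where bV: "bij_betw bV (gV G) (gV H)" and bE: "bij_betw bE (gE G) (gE H)"
    and b_hom: "\<forall>f\<in>gE G. gsrc H (bE f) = bV (gsrc G f) \<and> gtgt H (bE f) = bV (gtgt G f)"
    and b_phiV: "\<forall>w\<in>gV G. phiV H (bV w) = phiV G w"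
    and b_phiE: "\<forall>f\<in>gE G. phiE H (bE f) = phiE G f"
    using assms(2) unfolding erg_iso_def by blast
  have "bij_betw (bV \<circ> aV) (gV F) (gV H)"
    using aV bV by (rule bij_betw_trans)
  moreover have "bij_betw (bE \<circ> aE) (gE F) (gE H)"
    using aE bE by (rule bij_betw_trans)
  moreover have "\<forall>f\<in>gE F. gsrc H ((bE \<circ> aE) f) = (bV \<circ> aV) (gsrc F f)
      \<and> gtgt H ((bE \<circ> aE) f) = (bV \<circ> aV) (gtgt F f)"
    using a_hom b_hom bij_betw_apply[OF aE] by simp
  moreover have "\<forall>w\<in>gV F. phiV H ((bV \<circ> aV) w) = phiV F w"
    using a_phiV b_phiV bij_betw_apply[OF aV] by simp
  moreover have "\<forall>f\<in>gE F. phiE H ((bE \<circ> aE) f) = phiE F f"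
    using a_phiE b_phiE bij_betw_apply[OF aE] by simp
  ultimately show ?thesis
    unfolding erg_iso_def by blast
qed

fun reindex_fvert :: "(nat \<Rightarrow> nat) \<Rightarrow> 'e fvert \<Rightarrow> 'e fvert" where
  "reindex_fvert \<sigma> (W i) = W (\<sigma> i)"
| "reindex_fvert \<sigma> (WY i y) = WY (\<sigma> i) y"

fun reindex_fedge :: "(nat \<Rightarrow> nat) \<Rightarrow> 'e fedge \<Rightarrow> 'e fedge" where
  "reindex_fedge \<sigma> (Fi i) = Fi (\<sigma> i)"
| "reindex_fedge \<sigma> (FY i y) = FY (\<sigma> i) y"

lemma Xi_rotate1:
  assumes "i < length w"
  shows "Xi s r sp (rotate1 w) i = Xi s r sp w (Suc i mod length w)"
proof -
  have "0 < length w" using assms by linarith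
  then have "Suc i mod length w < length w" by simp
  then show ?thesis using assms by (simp add: Xi_def nth_rotate1 mod_Suc_eq)
qed

lemma erg_iso_Fx_rotate1: "erg_iso (Fx s r sp (rotate1 w)) (Fx s r sp w)"
proof -
  let ?n = "length w"
  let ?F = "Fx s r sp (rotate1 w)" and ?G = "Fx s r sp w"
  define suc where "suc i = Suc i mod ?n" for i
  define pred where "pred i = (i + ?n - 1) mod ?n" for i
  have suc_pred: "suc (pred i) = i" if "i < ?n" for i
    unfolding suc_def pred_def by (rule Suc_mod_pred_mod[OF that])
  have pred_suc: "pred (suc i) = i" if "i < ?n" for i
    unfolding suc_def pred_def by (rule pred_mod_Suc_mod[OF that])
  have suc_lt: "suc i < ?n" if "i < ?n" for i
    using that unfolding suc_def by (intro mod_less_divisor) linarith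
  have pred_lt: "pred i < ?n" if "i < ?n" for i
    using that unfolding pred_def by (intro mod_less_divisor) linarith
  have Xi_suc: "Xi s r sp (rotate1 w) i = Xi s r sp w (suc i)" if "i < ?n" for i
    using Xi_rotate1[OF that] by (simp add: suc_def)
  have Xi_pred: "Xi s r sp w i = Xi s r sp (rotate1 w) (pred i)" if "i < ?n" for i
    using Xi_suc[OF pred_lt[OF that]] suc_pred[OF that] by simp
  have "bij_betw (reindex_fvert suc) (gV ?F) (gV ?G)"
  proof (rule bij_betw_byWitness[where f' = "reindex_fvert pred"])
    show "\<forall>v\<in>gV ?F. reindex_fvert pred (reindex_fvert suc v) = v"
      by (auto simp: Fx_simps pred_suc)
    show "\<forall>v\<in>gV ?G. reindex_fvert suc (reindex_fvert pred v) = v"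
      by (auto simp: Fx_simps suc_pred)
    show "reindex_fvert suc ` gV ?F \<subseteq> gV ?G"
      by (auto simp: Fx_simps suc_lt Xi_suc)
    show "reindex_fvert pred ` gV ?G \<subseteq> gV ?F"
      by (auto simp: Fx_simps pred_lt Xi_pred)
  qed
  moreover have "bij_betw (reindex_fedge suc) (gE ?F) (gE ?G)"
  proof (rule bij_betw_byWitness[where f' = "reindex_fedge pred"])
    show "\<forall>f\<in>gE ?F. reindex_fedge pred (reindex_fedge suc f) = f"
      by (auto simp: Fx_simps pred_suc)
    show "\<forall>f\<in>gE ?G. reindex_fedge suc (reindex_fedge pred f) = f"
      by (auto simp: Fx_simps suc_pred)
    show "reindex_fedge suc ` gE ?F \<subseteq> gE ?G"
      by (auto simp: Fx_simps suc_lt Xi_suc)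
    show "reindex_fedge pred ` gE ?G \<subseteq> gE ?F"
      by (auto simp: Fx_simps pred_lt Xi_pred)
  qed
  moreover have "\<forall>f\<in>gE ?F. gsrc ?G (reindex_fedge suc f) = reindex_fvert suc (gsrc ?F f)
      \<and> gtgt ?G (reindex_fedge suc f) = reindex_fvert suc (gtgt ?F f)"
    using pred_suc suc_pred by (auto simp: Fx_simps pred_def)
  moreover have "\<forall>v\<in>gV ?F. phiV ?G (reindex_fvert suc v) = phiV ?F v"
    by (auto simp: Fx_simps suc_def nth_rotate1)
  moreover have "\<forall>f\<in>gE ?F. phiE ?G (reindex_fedge suc f) = phiE ?F f"
    by (auto simp: Fx_simps suc_def nth_rotate1)
  ultimately show ?thesis
    unfolding erg_iso_def by blast
qed

lemma erg_iso_Fx_rotate: "erg_iso (Fx s r sp (rotate k w)) (Fx s r sp w)"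
proof (induction k)
  case 0
  show ?case by (simp add: erg_iso_refl)
next
  case (Suc k)
  show ?case
    using erg_iso_trans[OF erg_iso_Fx_rotate1 Suc.IH] by simp
qed

text \<open>The distance of a vertex of F_x from its cycle: every edge raises it by one, except
  the cycle edges Fi, on which it stays 0.\<close>

fun fdepth :: "'e fvert \<Rightarrow> nat" where
  "fdepth (W i) = 0"
| "fdepth (WY i y) = length y"

lemma fdepth_gsrc_Fx: "fdepth (gsrc (Fx s r sp z) f) = fdepth (gtgt (Fx s r sp z) f) - 1"
  by (cases f) (simp_all add: Fx_simps)

lemma Fx_vertex_fdepth_0:
  assumes "v \<in> gV (Fx s r sp z)" and "fdepth v = 0"
  shows "\<exists>j<length z. v = W j"
  using assms by (auto simp: Fx_simps Xi_def basis_path_def dpath_def)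

lemma Fx_edge_into_W:
  assumes "f \<in> gE (Fx s r sp z)" and "gtgt (Fx s r sp z) f = W j"
  shows "f = Fi j"
  using assms by (auto simp: Fx_simps)

lemma rotate_of_cyclic_index_map:
  fixes \<sigma> :: "nat \<Rightarrow> nat"
  assumes "x \<noteq> []"
    and lt: "\<And>i. i < length x \<Longrightarrow> \<sigma> i < length z"
    and nth: "\<And>i. i < length x \<Longrightarrow> x ! i = z ! \<sigma> i"
    and suc: "\<And>i. i < length x \<Longrightarrow> \<sigma> (Suc i mod length x) = Suc (\<sigma> i) mod length z"
    and inj: "inj_on \<sigma> {..<length x}"
  shows "x = rotate (\<sigma> 0) z"
proof -
  let ?m = "length x" and ?n = "length z"
  have m: "0 < ?m" using assms(1) by simp
  have n: "0 < ?n" using lt[OF m] by linarith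
  have closed: "\<sigma> i = (\<sigma> 0 + i) mod ?n" if "i < ?m" for i
    using that
  proof (induction i)
    case 0
    show ?case using lt[OF m] by simp
  next
    case (Suc i)
    then have "\<sigma> (Suc i) = Suc (\<sigma> i) mod ?n" using suc[of i] by simp
    then show ?case using Suc by (simp add: mod_Suc_eq)
  qed
  have "?m \<le> ?n"
  proof (rule ccontr)
    assume "\<not> ?m \<le> ?n"
    then have "\<sigma> ?n = \<sigma> 0" using closed[of ?n] lt[OF m] by simp
    then show False using inj \<open>\<not> ?m \<le> ?n\<close> m n by (auto dest: inj_onD)
  qed
  moreover have "?n dvd ?m"
  proof -
    have "\<sigma> 0 = Suc (\<sigma> (?m - 1)) mod ?n" using suc[of "?m - 1"] m by simp
    also have "\<dots> = (\<sigma> 0 + ?m) mod ?n" using closed[of "?m - 1"] m by (simp add: mod_Suc_eq)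
    finally have "(\<sigma> 0 + ?m) mod ?n = \<sigma> 0 mod ?n" using lt[OF m] by simp
    then show ?thesis by (simp add: mod_eq_dvd_iff_nat)
  qed
  ultimately have "?m = ?n" using m by (simp add: dvd_imp_le le_antisym)
  then show ?thesis
    by (intro nth_equalityI) (simp_all add: nth closed nth_rotate)
qed

lemma erg_iso_Fx_cyclic_index_map:
  assumes "x \<noteq> []" and "erg_iso (Fx s r sp x) (Fx s r sp z)"
  obtains \<sigma> where "\<And>i. i < length x \<Longrightarrow> \<sigma> i < length z"
    and "\<And>i. i < length x \<Longrightarrow> x ! i = z ! \<sigma> i"
    and "\<And>i. i < length x \<Longrightarrow> \<sigma> (Suc i mod length x) = Suc (\<sigma> i) mod length z"
    and "inj_on \<sigma> {..<length x}"
proof -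
  let ?m = "length x" and ?n = "length z"
  let ?FX = "Fx s r sp x" and ?FZ = "Fx s r sp z"
  obtain aV aE where aV: "bij_betw aV (gV ?FX) (gV ?FZ)" and aE: "bij_betw aE (gE ?FX) (gE ?FZ)"
    and hom: "\<forall>f\<in>gE ?FX. gsrc ?FZ (aE f) = aV (gsrc ?FX f) \<and> gtgt ?FZ (aE f) = aV (gtgt ?FX f)"
    and phE: "\<forall>f\<in>gE ?FX. phiE ?FZ (aE f) = phiE ?FX f"
    using assms(2) unfolding erg_iso_def by blast
  define suc where "suc i = Suc i mod ?m" for i
  have suc_lt: "suc i < ?m" for i
    using assms(1) unfolding suc_def by simp
  have Fi_in: "Fi i \<in> gE ?FX" and W_in: "W i \<in> gV ?FX" if "i < ?m" for i
    using that by (simp_all add: Fx_simps)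
  have cycle_edge: "gsrc ?FZ (aE (Fi (suc i))) = aV (W i) \<and> gtgt ?FZ (aE (Fi (suc i))) = aV (W (suc i))"
    if "i < ?m" for i
    using hom Fi_in[OF suc_lt] pred_mod_Suc_mod[OF that] by (simp add: Fx_simps suc_def)
  define d where "d i = fdepth (aV (W i))" for i
  have d_suc: "d i = d (suc i) - 1" if "i < ?m" for i
    using cycle_edge[OF that] fdepth_gsrc_Fx[of s r sp z "aE (Fi (suc i))"] unfolding d_def by simp
  have d_0: "d i = 0" if "i < ?m" for i
  proof -
    \<comment> \<open>going around the cycle, the depth of the image drops by one per step, so its maximum is 0\<close>
    let ?M = "Max (d ` {..<?m})"
    have "?M \<in> d ` {..<?m}" using assms(1) by (intro Max_in) auto
    moreover have "d i \<le> ?M - 1" if "i < ?m" for i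
      using d_suc[OF that] suc_lt[of i] by (simp add: diff_le_mono)
    ultimately have "?M = 0" by fastforce
    then show ?thesis using that Max_ge[of "d ` {..<?m}" "d i"] by simp
  qed
  have "\<exists>j<?n. aV (W i) = W j" if "i < ?m" for i
    using Fx_vertex_fdepth_0[OF bij_betw_apply[OF aV W_in[OF that]]] d_0[OF that]
    unfolding d_def by simp
  then obtain \<sigma> where \<sigma>: "\<And>i. i < ?m \<Longrightarrow> \<sigma> i < ?n \<and> aV (W i) = W (\<sigma> i)"
    by metis
  have edge: "aE (Fi i) = Fi (\<sigma> i)" if "i < ?m" for i
  proof (rule Fx_edge_into_W)
    show "aE (Fi i) \<in> gE ?FZ" by (rule bij_betw_apply[OF aE Fi_in[OF that]])
    show "gtgt ?FZ (aE (Fi i)) = W (\<sigma> i)"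
      using hom Fi_in[OF that] \<sigma>[OF that] by (simp add: Fx_simps)
  qed
  show ?thesis
  proof
    show "\<sigma> i < ?n" if "i < ?m" for i using \<sigma>[OF that] by simp
    show "x ! i = z ! \<sigma> i" if "i < ?m" for i
      using bspec[OF phE Fi_in[OF that]] edge[OF that] by (simp add: Fx_simps)
    show "\<sigma> (Suc i mod ?m) = Suc (\<sigma> i) mod ?n" if "i < ?m" for i
    proof -
      have "W (\<sigma> i) = W ((\<sigma> (suc i) + ?n - 1) mod ?n)"
        using cycle_edge[OF that] edge[OF suc_lt] \<sigma>[OF that] by (simp add: Fx_simps)
      then show ?thesis
        using Suc_mod_pred_mod \<sigma>[OF suc_lt[of i]] unfolding suc_def by simp
    qed
    show "inj_on \<sigma> {..<?m}"
    proof (rule inj_onI)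
      fix i j assume i: "i \<in> {..<?m}" and j: "j \<in> {..<?m}" and "\<sigma> i = \<sigma> j"
      then have "aV (W i) = aV (W j)" using \<sigma> by simp
      moreover have "W i \<in> gV ?FX" and "W j \<in> gV ?FX" using W_in i j by simp_all
      ultimately show "i = j"
        using inj_on_eq_iff[OF bij_betw_imp_inj_on[OF aV]] by simp
    qed
  qed
qed

theorem proposition5p14:
  fixes s r :: "'e \<Rightarrow> 'v" and sp :: "'v \<Rightarrow> 'e" and x z :: "'e dedge list"
  assumes "row_finite s" and "special_choice s sp"
    and "x \<in> Xc s r" and "z \<in> Xc s r"
  shows "erg_iso (Fx s r sp x) (Fx s r sp z) \<longleftrightarrow> cyc_equiv x z"
proof -
  have "x \<noteq> []" and "z \<noteq> []"
    using assms(3,4) by (auto simp: Xc_def dpath_def)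
  have "erg_iso (Fx s r sp x) (Fx s r sp z) \<longleftrightarrow> (\<exists>k. x = rotate k z)"
  proof
    assume "erg_iso (Fx s r sp x) (Fx s r sp z)"
    then show "\<exists>k. x = rotate k z"
      by (elim erg_iso_Fx_cyclic_index_map[OF \<open>x \<noteq> []\<close>])
        (metis rotate_of_cyclic_index_map[OF \<open>x \<noteq> []\<close>])
  next
    assume "\<exists>k. x = rotate k z"
    then show "erg_iso (Fx s r sp x) (Fx s r sp z)"
      using erg_iso_Fx_rotate by blast
  qed
  then show ?thesis
    using cyc_equiv_iff_rotate[OF \<open>z \<noteq> []\<close>] by simp
qed

end
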